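(* Let $A$ be a $0$-$1$ matrix over a set $\mathcal G$ with no identically zero rows, and let $L_\alpha$, $\psi$ and $j$ be as in the context. If $f\in\bigoplus_{x\in\mathcal G}C(\Delta_x;\mathbb Z)$ satisfies $L_\alpha f\in\psi(\tilde{\mathfrak R}_A)$, then $f\in j\big(\bigoplus_{x\in\mathcal G}\mathbb Z\big)$.
   Context: $\mathbb F$ is the free group on $\mathcal G$, $\mathbb F^+$ the unital subsemigroup generated by $\mathcal G$. $\Omega_A^\tau$ is the set of $\xi\subset\mathbb F$ such that $e\in\xi$, $\xi$ is convex (contains the shortest path between any two of its elements), for each $\omega\in\xi$ there is at most one $y\in\mathcal G$ with $\omega y\in\xi$, and if $\omega,\omega y\in\xi$ ($y\in\mathcal G$) then for $x\in\mathcal G$: $\omega x^{-1}\in\xi\iff A(x,y)=1$. With the product topology on subsets of $\mathbb F$, $\widetilde\Omega_A$ is the closure in $\Omega_A^\tau$ of the elements with no upper bound for the order $s\le t\iff s^{-1}t\in\mathbb F^+$. $\Delta_t=\{\xi\in\widetilde\Omega_A:t\in\xi\}$ (clopen). $L_\alpha:\bigoplus_{x\in\mathcal G}C(\Delta_x,\mathbb Z)\to C(\widetilde\Omega_A,\mathbb Z)$ is $L_\alpha f=\sum_x\big(f_x-\alpha_x^{-1}(f_x)\big)$, where $f_x$ is extended by $0$ off $\Delta_x$ and $\alpha_x^{-1}(f_x)(\xi)=f_x(x\xi)$ for $\xi\in\Delta_{x^{-1}}$, $0$ otherwise. $j:\bigoplus_{x\in\mathcal G}\mathbb Z\to\bigoplus_{x\in\mathcal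 G}C(\Delta_x;\mathbb Z)$ sends the $x$-th basis element to the characteristic function $1_{\Delta_x}$ in the $x$-th summand. $\rho_i(j)=A(i,j)$, $\delta_i=$ indicator of $\{i\}$; $\tilde R_A\subset\ell^\infty(\mathcal G)$ is the $C^*$-algebra generated by $\mathbf 1$ and all $\rho_i,\delta_i$; $\tilde{\mathfrak R}_A\subset\mathbb Z^{\mathcal G}$ is the ring generated by $\mathbf 1$ and all $\delta_i,\rho_i$. $\tilde{\mathcal G}=\mathcal G\cup\{\star\}$; $c_j(i)=A(i,j)$; $\tilde\Gamma_A$ is the closure of $\{(j,c_j)\}$ in $\tilde{\mathcal G}\times\{0,1\}^{\mathcal G}$; each $f\in\tilde R_A$ has a unique continuous extension $\hat f$ to $\tilde\Gamma_A$ (identifying $j$ with $(j,c_j)$). For $\xi\in\widetilde\Omega_A$, $R_\xi(e)=\{x\in\mathcal G:x^{-1}\in\xi\}$ and $\sigma(\xi)_1$ is the unique element of $\xi\cap\mathcal G$, or $\star$ if empty. $\psi:\tilde R_A\to C(\widetilde\Omega_A)$ is $\psi(f)(\xi)=\hat f(\sigma(\xi)_1,R_\xi(e))$; it is an injective unital $*$-homomorphism with $\psi(\delta_i)=1_{\Delta_i}$ and $\psi(\rho_i)=1_{\Delta_{i^{-1}}}$. *)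

theory Defs
  imports Main
begin

text \<open>A letter (x, True) stands for the generator x, (x, False) for its inverse.\<close>
type_synonym 'g word = "('g \<times> bool) list"

fun reduced :: "'g word \<Rightarrow> bool" where
  "reduced [] = True"
| "reduced [a] = True"
| "reduced (a # b # w) = (\<not> (fst a = fst b \<and> snd a \<noteq> snd b) \<and> reduced (b # w))"

definition inv_letter :: "'g \<times> bool \<Rightarrow> 'g \<times> bool" where
  "inv_letter a = (fst a, \<not> snd a)"

definition mult1 :: "'g word \<Rightarrow> 'g \<times> bool \<Rightarrow> 'g word" where
  "mult1 w a = (if w \<noteq> [] \<and> last w = inv_letter a then butlast w else w @ [a])"

definition fmult :: "'g word \<Rightarrow> 'g word \<Rightarrow> 'g word" where
  "fmult u v = foldl mult1 u v"

definition finv :: "'g word \<Rightarrow> 'g word" where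
  "finv w = rev (map inv_letter w)"

definition FG :: "'g word set" where
  "FG = {w. reduced w}"

definition FPlus :: "'g word set" where
  "FPlus = {w. reduced w \<and> (\<forall>a\<in>set w. snd a)}"

definition gen :: "'g \<Rightarrow> 'g word" where
  "gen x = [(x, True)]"

definition geninv :: "'g \<Rightarrow> 'g word" where
  "geninv x = [(x, False)]"

definition fle :: "'g word \<Rightarrow> 'g word \<Rightarrow> bool" where
  "fle s t \<longleftrightarrow> fmult (finv s) t \<in> FPlus"

text \<open>Convexity: for \<omega>, \<nu> in \<xi>, the shortest path from \<omega> to \<nu> in the Cayley tree,
  i.e. the elements \<omega> p with p a prefix of the reduced word \<omega>^-1 \<nu>, lies in \<xi>.\<close>
definition convex :: "'g word set \<Rightarrow> bool" where
  "convex \<xi> \<longleftrightarrow> (\<forall>\<omega>\<in>\<xi>. \<forall>\<nu>\<in>\<xi>. \<forall>k. fmult \<omega> (take k (fmult (finv \<omega>) \<nu>)) \<in> \<xi>)"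

definition OmegaTau :: "('g \<Rightarrow> 'g \<Rightarrow> bool) \<Rightarrow> 'g word set set" where
  "OmegaTau A = {\<xi>. \<xi> \<subseteq> FG \<and> [] \<in> \<xi> \<and> convex \<xi>
     \<and> (\<forall>\<omega>\<in>\<xi>. \<forall>y z. fmult \<omega> (gen y) \<in> \<xi> \<and> fmult \<omega> (gen z) \<in> \<xi> \<longrightarrow> y = z)
     \<and> (\<forall>\<omega>\<in>\<xi>. \<forall>y. fmult \<omega> (gen y) \<in> \<xi> \<longrightarrow>
           (\<forall>x. fmult \<omega> (geninv x) \<in> \<xi> \<longleftrightarrow> A x y))}"

definition no_upper_bound :: "'g word set \<Rightarrow> bool" where
  "no_upper_bound \<xi> \<longleftrightarrow> \<not> (\<exists>t\<in>FG. \<forall>s\<in>\<xi>. fle s t)"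

text \<open>Closure in OmegaTau A for the product topology on subsets of F (= {0,1}^F):
  \<xi> is in the closure of S iff every basic neighbourhood of \<xi>, given by a finite set of
  coordinates F0, meets S.\<close>
definition OmegaT :: "('g \<Rightarrow> 'g \<Rightarrow> bool) \<Rightarrow> 'g word set set" where
  "OmegaT A = {\<xi> \<in> OmegaTau A. \<forall>F0. finite F0 \<longrightarrow>
      (\<exists>\<eta>\<in>OmegaTau A. no_upper_bound \<eta> \<and> \<eta> \<inter> F0 = \<xi> \<inter> F0)}"

definition Delta :: "('g \<Rightarrow> 'g \<Rightarrow> bool) \<Rightarrow> 'g word \<Rightarrow> 'g word set set" where
  "Delta A t = {\<xi> \<in> OmegaT A. t \<in> \<xi>}"

text \<open>Continuity of an integer-valued function (Z discrete) on a subspace D of {0,1}^F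
  with the product topology.\<close>
definition cont_Z :: "'g word set set \<Rightarrow> ('g word set \<Rightarrow> int) \<Rightarrow> bool" where
  "cont_Z D h \<longleftrightarrow> (\<forall>\<xi>\<in>D. \<exists>F0. finite F0 \<and> (\<forall>\<eta>\<in>D. \<eta> \<inter> F0 = \<xi> \<inter> F0 \<longrightarrow> h \<eta> = h \<xi>))"

text \<open>An element of the direct sum is a family f with f x :: C(Delta_x, Z); only the values
  of f x on Delta_(gen x) are relevant. Finitely many components are nonzero.\<close>
definition dsum_support :: "('g \<Rightarrow> 'g \<Rightarrow> bool) \<Rightarrow> ('g \<Rightarrow> 'g word set \<Rightarrow> int) \<Rightarrow> 'g set" where
  "dsum_support A f = {x. \<exists>\<xi>\<in>Delta A (gen x). f x \<xi> \<noteq> 0}"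

definition in_dsum :: "('g \<Rightarrow> 'g \<Rightarrow> bool) \<Rightarrow> ('g \<Rightarrow> 'g word set \<Rightarrow> int) \<Rightarrow> bool" where
  "in_dsum A f \<longleftrightarrow> (\<forall>x. cont_Z (Delta A (gen x)) (f x)) \<and> finite (dsum_support A f)"

definition ext0 :: "('g \<Rightarrow> 'g \<Rightarrow> bool) \<Rightarrow> ('g \<Rightarrow> 'g word set \<Rightarrow> int) \<Rightarrow> 'g \<Rightarrow> 'g word set \<Rightarrow> int" where
  "ext0 A f x \<xi> = (if \<xi> \<in> Delta A (gen x) then f x \<xi> else 0)"

definition alpha_inv :: "('g \<Rightarrow> 'g \<Rightarrow> bool) \<Rightarrow> ('g \<Rightarrow> 'g word set \<Rightarrow> int) \<Rightarrow> 'g \<Rightarrow> 'g word set \<Rightarrow> int" where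
  "alpha_inv A f x \<xi> = (if \<xi> \<in> Delta A (geninv x) then f x (fmult (gen x) ` \<xi>) else 0)"

definition L_alpha :: "('g \<Rightarrow> 'g \<Rightarrow> bool) \<Rightarrow> ('g \<Rightarrow> 'g word set \<Rightarrow> int) \<Rightarrow> 'g word set \<Rightarrow> int" where
  "L_alpha A f \<xi> = (\<Sum>x\<in>dsum_support A f. ext0 A f x \<xi> - alpha_inv A f x \<xi>)"

definition in_image_j :: "('g \<Rightarrow> 'g \<Rightarrow> bool) \<Rightarrow> ('g \<Rightarrow> 'g word set \<Rightarrow> int) \<Rightarrow> bool" where
  "in_image_j A f \<longleftrightarrow> (\<exists>n :: 'g \<Rightarrow> int. finite {x. n x \<noteq> 0} \<and>
      (\<forall>x. \<forall>\<xi>\<in>Delta A (gen x). f x \<xi> = n x))"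

inductive_set RingA :: "('g \<Rightarrow> 'g \<Rightarrow> bool) \<Rightarrow> ('g \<Rightarrow> int) set" for A where
  one: "(\<lambda>_. 1) \<in> RingA A"
| delta: "(\<lambda>j. of_bool (j = i)) \<in> RingA A"
| rho: "(\<lambda>j. of_bool (A i j)) \<in> RingA A"
| add: "f \<in> RingA A \<Longrightarrow> g \<in> RingA A \<Longrightarrow> (\<lambda>j. f j + g j) \<in> RingA A"
| neg: "f \<in> RingA A \<Longrightarrow> (\<lambda>j. - f j) \<in> RingA A"
| mult: "f \<in> RingA A \<Longrightarrow> g \<in> RingA A \<Longrightarrow> (\<lambda>j. f j * g j) \<in> RingA A"

text \<open>Continuous extension hat f to tilde Gamma_A, for integer valued f. Points of
  tilde G = G \<union> {star} are 'g option (None = star); tilde G carries the topology in which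
  the points of G are isolated and the neighbourhoods of star are the cofinite sets
  (one-point compactification of discrete G); {0,1}^G carries the product topology
  (subsets c of G, basic neighbourhoods given by finite coordinate sets F0).
  Since f is Z-valued, hat f (t, c) is the value v that f takes on all j such that
  (j, c_j) lies in a suitable neighbourhood of (t, c), where c_j = {i. A i j}.\<close>
definition hat :: "('g \<Rightarrow> 'g \<Rightarrow> bool) \<Rightarrow> ('g \<Rightarrow> int) \<Rightarrow> 'g option \<Rightarrow> 'g set \<Rightarrow> int" where
  "hat A f t c = (THE v. \<exists>F0 N. finite F0 \<and> finite N \<and>
      (\<forall>j. (case t of Some i \<Rightarrow> j = i | None \<Rightarrow> j \<notin> N)
            \<and> (\<forall>i\<in>F0. A i j \<longleftrightarrow> i \<in> c) \<longrightarrow> f j = v))"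

definition sigma1 :: "'g word set \<Rightarrow> 'g option" where
  "sigma1 \<xi> = (if \<exists>x. gen x \<in> \<xi> then Some (THE x. gen x \<in> \<xi>) else None)"

definition R_e :: "'g word set \<Rightarrow> 'g set" where
  "R_e \<xi> = {x. geninv x \<in> \<xi>}"

definition psi :: "('g \<Rightarrow> 'g \<Rightarrow> bool) \<Rightarrow> ('g \<Rightarrow> int) \<Rightarrow> 'g word set \<Rightarrow> int" where
  "psi A f \<xi> = hat A f (sigma1 \<xi>) (R_e \<xi>)"

end

theory Submission
  imports Defs "HOL-Analysis.Function_Topology"
begin

text \<open>
  On \<open>Delta_y\<close> the function \<open>psi g\<close> is the constant \<open>g y\<close>, so the hypothesis reads
  \<open>f_y \<xi> = g y + (\<Sum>x with A x y. f_x (x \<xi>))\<close>: the point \<open>\<xi>\<close> contains \<open>x^-1\<close> exactly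
  when \<open>A x y\<close>, and then \<open>x \<xi>\<close> lies in \<open>Delta_x\<close>.
  By compactness every \<open>f_x\<close> is uniformly locally constant, so it depends only on the trace of
  \<open>\<xi>\<close> on a window \<open>W_K\<close>, where \<open>W_k\<close> consists of the words \<open>p q\<close> with \<open>p\<close> positive of
  length below \<open>k\<close> and \<open>q\<close> negative (all words of a configuration have this shape).
  Translation by \<open>x\<close> strips one positive letter, and negative tails are dictated by \<open>A\<close>,
  so the trace of \<open>x \<xi>\<close> on \<open>W_(k+1)\<close> only depends on the trace of \<open>\<xi>\<close> on \<open>W_k\<close>.
  Hence if all \<open>f_x\<close> depend only on \<open>W_(k+1)\<close>, the identity shows that they depend only on
  \<open>W_k\<close>; descending to \<open>W_0 = {}\<close> makes each \<open>f_y\<close> constant on \<open>Delta_y\<close>.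
\<close>

section \<open>Reduced words\<close>

lemma inv_letter_inv [simp]: "inv_letter (inv_letter a) = a"
  by (simp add: inv_letter_def)

lemma reduced_Cons: "reduced (a # w) \<longleftrightarrow> reduced w \<and> (w = [] \<or> hd w \<noteq> inv_letter a)"
  by (cases w) (auto simp: inv_letter_def prod_eq_iff)

lemma reduced_append:
  "reduced (u @ v) \<longleftrightarrow> reduced u \<and> reduced v \<and> (u = [] \<or> v = [] \<or> last u \<noteq> inv_letter (hd v))"
proof (induction u)
  case (Cons a u)
  then show ?case
    by (cases u; cases v) (auto simp: reduced_Cons inv_letter_def prod_eq_iff)
qed simp

lemma reduced_snoc: "reduced (w @ [a]) \<longleftrightarrow> reduced w \<and> (w = [] \<or> last w \<noteq> inv_letter a)"
  by (simp add: reduced_append)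

lemma reduced_take: "reduced w \<Longrightarrow> reduced (take k w)"
  using reduced_append[of "take k w" "drop k w"] by simp

lemma reduced_butlast: "reduced w \<Longrightarrow> reduced (butlast w)"
  by (simp add: butlast_conv_take reduced_take)

lemma reduced_mult1: "reduced w \<Longrightarrow> reduced (mult1 w a)"
  by (auto simp: mult1_def reduced_butlast reduced_snoc)

lemma reduced_fmult: "reduced u \<Longrightarrow> reduced (fmult u v)"
  unfolding fmult_def by (induction v arbitrary: u) (auto simp: reduced_mult1)

lemma fmult_Nil_right [simp]: "fmult u [] = u"
  by (simp add: fmult_def)

lemma fmult_snoc: "fmult u (v @ [a]) = mult1 (fmult u v) a"
  by (simp add: fmult_def)

lemma fmult_eq_append: "reduced (u @ v) \<Longrightarrow> fmult u v = u @ v"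
proof (induction v arbitrary: u)
  case (Cons b v)
  have "mult1 u b = u @ [b]"
    using Cons.prems by (auto simp: mult1_def reduced_append)
  then show ?case
    using Cons.IH[of "u @ [b]"] Cons.prems by (simp add: fmult_def)
qed simp

lemma fmult_Nil_left [simp]: "reduced v \<Longrightarrow> fmult [] v = v"
  by (simp add: fmult_eq_append)

lemma mult1_mult1_inv_letter:
  assumes "reduced u"
  shows "mult1 (mult1 u a) (inv_letter a) = u"
proof (cases "u \<noteq> [] \<and> last u = inv_letter a")
  case True
  then obtain v where v: "u = v @ [inv_letter a]"
    by (metis append_butlast_last_id)
  then have "v = [] \<or> last v \<noteq> a"
    using assms by (simp add: reduced_snoc)
  then show ?thesis
    using v by (auto simp: mult1_def)
qed (auto simp: mult1_def)

lemma fmult_fmult_eq_fmult_append: "reduced u \<Longrightarrow> fmult u (fmult v w) = fmult u (v @ w)"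
proof (induction w rule: rev_induct)
  case (snoc a w)
  show ?case
  proof (cases "fmult v w \<noteq> [] \<and> last (fmult v w) = inv_letter a")
    case True
    then obtain r where r: "fmult v w = r @ [inv_letter a]"
      by (metis append_butlast_last_id)
    have "fmult u (v @ w @ [a]) = mult1 (mult1 (fmult u r) (inv_letter a)) a"
      using snoc r by (simp flip: append_assoc add: fmult_snoc)
    also have "\<dots> = fmult u r"
      using mult1_mult1_inv_letter[of "fmult u r" "inv_letter a"] snoc.prems
      by (simp add: reduced_fmult)
    finally show ?thesis
      using r by (simp add: fmult_snoc mult1_def)
  next
    case False
    then have "fmult v (w @ [a]) = fmult v w @ [a]"
      by (auto simp: fmult_snoc mult1_def)
    then show ?thesis
      using snoc by (simp flip: append_assoc add: fmult_snoc)
  qed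
qed simp

lemma fmult_assoc: "reduced u \<Longrightarrow> fmult (fmult u v) w = fmult u (fmult v w)"
  by (simp add: fmult_fmult_eq_fmult_append) (simp add: fmult_def)

lemma finv_Nil [simp]: "finv [] = []"
  by (simp add: finv_def)

lemma finv_finv [simp]: "finv (finv u) = u"
  by (simp add: finv_def rev_map comp_def)

lemma fmult_finv_right [simp]: "fmult u (finv u) = []"
proof (induction u rule: rev_induct)
  case (snoc a u)
  then show ?case
    by (simp add: fmult_def finv_def mult1_def)
qed (simp add: fmult_def)

lemma fmult_finv_left [simp]: "fmult (finv u) u = []"
  using fmult_finv_right[of "finv u"] by simp

lemma reduced_finv: "reduced u \<Longrightarrow> reduced (finv u)"
proof (induction u)
  case (Cons a u)
  moreover have "u \<noteq> [] \<Longrightarrow> last (finv u) = inv_letter (hd u)"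
    by (simp add: finv_def last_rev hd_map)
  ultimately show ?case
    by (auto simp: reduced_Cons reduced_snoc finv_def inv_letter_def prod_eq_iff)
qed simp

lemma fmult_finv_fmult: "reduced t \<Longrightarrow> reduced w \<Longrightarrow> fmult (finv t) (fmult t w) = w"
  by (metis reduced_finv fmult_assoc fmult_finv_left fmult_Nil_left)

lemma fmult_fmult_finv: "reduced t \<Longrightarrow> reduced w \<Longrightarrow> fmult t (fmult (finv t) w) = w"
  by (metis fmult_assoc fmult_finv_right fmult_Nil_left)

lemma finv_fmult:
  assumes u: "reduced u" and v: "reduced v"
  shows "finv (fmult u v) = fmult (finv v) (finv u)"
proof -
  have "fmult (fmult u v) (fmult (finv v) (finv u)) = []"
    using u v by (simp add: fmult_assoc fmult_fmult_finv reduced_finv)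
  then have "fmult (finv (fmult u v)) [] = fmult (finv v) (finv u)"
    using fmult_finv_fmult[of "fmult u v" "fmult (finv v) (finv u)"] u v
    by (simp add: reduced_fmult reduced_finv)
  then show ?thesis by simp
qed

lemma finv_fmult_fmult_left:
  assumes "reduced t" "reduced u" "reduced v"
  shows "fmult (finv (fmult t u)) (fmult t v) = fmult (finv u) v"
  using assms
  by (simp add: finv_fmult fmult_assoc reduced_finv fmult_finv_fmult)

lemma fmult_letter_left:
  assumes "reduced w"
  shows "fmult [a] w = (if w \<noteq> [] \<and> hd w = inv_letter a then tl w else a # w)"
proof (cases w)
  case (Cons b v)
  show ?thesis
  proof (cases "b = inv_letter a")
    case True
    then have "fmult [a] w = fmult [] v"
      using Cons by (simp add: fmult_def mult1_def)
    then show ?thesis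
      using assms Cons True by (simp add: reduced_Cons)
  next
    case False
    then show ?thesis
      using assms Cons by (simp add: fmult_eq_append reduced_Cons)
  qed
qed simp

lemma fmult_gen: "fmult w (gen x) = mult1 w (x, True)"
  by (simp add: gen_def fmult_def)

lemma fmult_geninv: "fmult w (geninv x) = mult1 w (x, False)"
  by (simp add: geninv_def fmult_def)

lemma finv_gen [simp]: "finv (gen x) = geninv x"
  by (simp add: finv_def gen_def geninv_def inv_letter_def)

lemma reduced_gen [simp]: "reduced (gen x)" "reduced (geninv x)"
  by (simp_all add: gen_def geninv_def)

lemma mem_fmult_image_iff:
  assumes "reduced t" and "\<xi> \<subseteq> FG"
  shows "w \<in> fmult t ` \<xi> \<longleftrightarrow> reduced w \<and> fmult (finv t) w \<in> \<xi>"
proof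
  assume "w \<in> fmult t ` \<xi>"
  then obtain v where "v \<in> \<xi>" "w = fmult t v" by blast
  then show "reduced w \<and> fmult (finv t) w \<in> \<xi>"
    using assms by (auto simp: FG_def reduced_fmult fmult_finv_fmult)
next
  assume "reduced w \<and> fmult (finv t) w \<in> \<xi>"
  then show "w \<in> fmult t ` \<xi>"
    using assms fmult_fmult_finv by (metis image_eqI)
qed

lemma fmult_mem_fmult_image_iff:
  assumes "reduced t" and "\<xi> \<subseteq> FG" and "reduced v"
  shows "fmult t v \<in> fmult t ` \<xi> \<longleftrightarrow> v \<in> \<xi>"
  using assms by (auto simp: mem_fmult_image_iff fmult_finv_fmult reduced_fmult)

section \<open>Configurations\<close>

lemma OmegaTau_subset_FG: "\<xi> \<in> OmegaTau A \<Longrightarrow> \<xi> \<subseteq> FG"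
  by (simp add: OmegaTau_def)

lemma OmegaTau_reduced: "\<xi> \<in> OmegaTau A \<Longrightarrow> w \<in> \<xi> \<Longrightarrow> reduced w"
  by (auto simp: OmegaTau_def FG_def)

lemma OmegaTau_Nil: "\<xi> \<in> OmegaTau A \<Longrightarrow> [] \<in> \<xi>"
  by (simp add: OmegaTau_def)

lemma OmegaTau_convex: "\<xi> \<in> OmegaTau A \<Longrightarrow> convex \<xi>"
  by (simp add: OmegaTau_def)

lemma OmegaTau_gen_unique:
  "\<xi> \<in> OmegaTau A \<Longrightarrow> \<omega> \<in> \<xi> \<Longrightarrow> fmult \<omega> (gen y) \<in> \<xi> \<Longrightarrow> fmult \<omega> (gen z) \<in> \<xi> \<Longrightarrow> y = z"
  unfolding OmegaTau_def by blast

lemma OmegaTau_geninv_iff: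
  "\<xi> \<in> OmegaTau A \<Longrightarrow> \<omega> \<in> \<xi> \<Longrightarrow> fmult \<omega> (gen y) \<in> \<xi> \<Longrightarrow>
   fmult \<omega> (geninv x) \<in> \<xi> \<longleftrightarrow> A x y"
  unfolding OmegaTau_def by blast

lemma OmegaTau_take: "\<xi> \<in> OmegaTau A \<Longrightarrow> w \<in> \<xi> \<Longrightarrow> take k w \<in> \<xi>"
  using OmegaTau_convex[unfolded convex_def, of \<xi> A] OmegaTau_Nil[of \<xi> A]
    OmegaTau_reduced[of \<xi> A w] reduced_take[of w k]
  by (metis finv_Nil fmult_Nil_left)

lemma OmegaTau_prefix: "\<xi> \<in> OmegaTau A \<Longrightarrow> u @ v \<in> \<xi> \<Longrightarrow> u \<in> \<xi>"
  using OmegaTau_take[of \<xi> A "u @ v" "length u"] by simp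

lemma OmegaTau_butlast: "\<xi> \<in> OmegaTau A \<Longrightarrow> w \<in> \<xi> \<Longrightarrow> butlast w \<in> \<xi>"
  by (simp add: butlast_conv_take OmegaTau_take)

lemma OmegaTau_gen_iff:
  assumes "\<xi> \<in> OmegaTau A" and "gen y \<in> \<xi>"
  shows "gen x \<in> \<xi> \<longleftrightarrow> x = y"
  using OmegaTau_gen_unique[OF assms(1) OmegaTau_Nil[OF assms(1)], of x y] assms(2) by auto

lemma OmegaTau_geninv_iff_gen:
  assumes "\<xi> \<in> OmegaTau A" and "gen y \<in> \<xi>"
  shows "geninv x \<in> \<xi> \<longleftrightarrow> A x y"
  using OmegaTau_geninv_iff[OF assms(1) OmegaTau_Nil[OF assms(1)], of y x] assms(2) by simp

lemma OmegaTau_geninv_gen: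
  assumes O: "\<xi> \<in> OmegaTau A" and z: "geninv z \<in> \<xi>" and zx: "[(z, False), (x, True)] \<in> \<xi>"
  shows "x = z"
proof (rule ccontr)
  assume "x \<noteq> z"
  then have "fmult (geninv z) (gen x) \<in> \<xi>"
    using zx by (simp add: geninv_def fmult_gen mult1_def inv_letter_def)
  moreover have "fmult (geninv z) (gen z) \<in> \<xi>"
    using OmegaTau_Nil[OF O] by (simp add: geninv_def fmult_gen mult1_def inv_letter_def)
  ultimately show False
    using OmegaTau_gen_unique[OF O z] \<open>x \<noteq> z\<close> by blast
qed

definition positive_word :: "'g word \<Rightarrow> bool" where
  "positive_word p \<longleftrightarrow> (\<forall>a\<in>set p. snd a)"

definition negative_word :: "'g word \<Rightarrow> bool" where
  "negative_word q \<longleftrightarrow> (\<forall>a\<in>set q. \<not> snd a)"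

lemma OmegaTau_positive_negative:
  assumes O: "\<xi> \<in> OmegaTau A"
  shows "w \<in> \<xi> \<Longrightarrow> \<exists>p q. w = p @ q \<and> positive_word p \<and> negative_word q"
proof (induction w rule: rev_induct)
  case Nil
  show ?case by (auto simp: positive_word_def negative_word_def)
next
  case (snoc a w)
  have w: "w \<in> \<xi>"
    using OmegaTau_prefix[OF O snoc.prems] .
  then obtain p q where pq: "w = p @ q" "positive_word p" "negative_word q"
    using snoc.IH by blast
  consider "\<not> snd a" | "snd a" "q = []" | "snd a" "q \<noteq> []" by blast
  then show ?case
  proof cases
    case 1
    with pq show ?thesis
      by (intro exI[of _ p] exI[of _ "q @ [a]"]) (auto simp: negative_word_def)
  next
    case 2
    with pq show ?thesis
      by (intro exI[of _ "p @ [a]"] exI[of _ "[]"]) (auto simp: positive_word_def negative_word_def)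
  next
    case 3
    \<comment> \<open>a positive letter after a negative one would give the vertex w two successors\<close>
    let ?x = "fst (last w)"
    have lw: "last w = (?x, False)" "w \<noteq> []"
      using 3 pq by (auto simp: negative_word_def prod_eq_iff)
    moreover have "last w \<noteq> inv_letter a"
      using lw OmegaTau_reduced[OF O snoc.prems] by (simp add: reduced_snoc)
    ultimately have "?x \<noteq> fst a"
      using 3 by (auto simp: inv_letter_def prod_eq_iff)
    moreover have "fmult w (gen ?x) \<in> \<xi>"
      using lw OmegaTau_butlast[OF O w] by (simp add: fmult_gen mult1_def inv_letter_def)
    moreover have "fmult w (gen (fst a)) \<in> \<xi>"
      using lw 3 \<open>?x \<noteq> fst a\<close> snoc.prems
      by (cases a) (auto simp: fmult_gen mult1_def inv_letter_def)
    ultimately show ?thesis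
      using OmegaTau_gen_unique[OF O w] by blast
  qed
qed

lemma OmegaTau_append_negative_letter:
  assumes O: "\<xi> \<in> OmegaTau A" and w: "w \<in> \<xi>" "w \<noteq> []" "\<not> snd (last w)"
  shows "w @ [(x, False)] \<in> \<xi> \<longleftrightarrow> A x (fst (last w))"
proof -
  have "fmult w (gen (fst (last w))) = butlast w"
    using w by (simp add: fmult_gen mult1_def inv_letter_def prod_eq_iff)
  then have "fmult w (geninv x) \<in> \<xi> \<longleftrightarrow> A x (fst (last w))"
    using OmegaTau_geninv_iff[OF O w(1)] OmegaTau_butlast[OF O w(1)] by simp
  moreover have "fmult w (geninv x) = w @ [(x, False)]"
    using w by (auto simp: fmult_geninv mult1_def inv_letter_def)
  ultimately show ?thesis by simp
qed

lemma OmegaTau_negative_tail_iff: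
  assumes O: "\<xi> \<in> OmegaTau A" and O': "\<xi>' \<in> OmegaTau A"
    and w: "w \<noteq> []" "\<not> snd (last w)" and agree: "w \<in> \<xi> \<longleftrightarrow> w \<in> \<xi>'"
    and q: "negative_word q"
  shows "w @ q \<in> \<xi> \<longleftrightarrow> w @ q \<in> \<xi>'"
  using q
proof (induction q rule: rev_induct)
  case (snoc b q)
  have IH: "w @ q \<in> \<xi> \<longleftrightarrow> w @ q \<in> \<xi>'"
    using snoc by (simp add: negative_word_def)
  have b: "b = (fst b, False)"
    using snoc.prems by (simp add: negative_word_def prod_eq_iff)
  have last: "\<not> snd (last (w @ q))"
    using snoc.prems w by (cases q rule: rev_cases) (auto simp: negative_word_def)
  show ?case
  proof (cases "w @ q \<in> \<xi>")
    case True
    then show ?thesis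
      using IH OmegaTau_append_negative_letter[OF O _ _ last, of "fst b"]
        OmegaTau_append_negative_letter[OF O' _ _ last, of "fst b"] w b
      by (metis append_assoc append_is_Nil_conv)
  next
    case False
    then show ?thesis
      using IH OmegaTau_prefix[OF O, of "w @ q" "[b]"] OmegaTau_prefix[OF O', of "w @ q" "[b]"]
      by auto
  qed
qed (use agree in simp)

lemma OmegaT_subset_OmegaTau: "OmegaT A \<subseteq> OmegaTau A"
  by (auto simp: OmegaT_def)

lemma Delta_subset_OmegaTau: "Delta A t \<subseteq> OmegaTau A"
  using OmegaT_subset_OmegaTau by (auto simp: Delta_def)

lemma Delta_gen_iff:
  assumes "\<xi> \<in> Delta A (gen y)"
  shows "\<xi> \<in> Delta A (gen x) \<longleftrightarrow> x = y"
  using assms OmegaTau_gen_iff[of \<xi> A y x] Delta_subset_OmegaTau by (auto simp: Delta_def)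

section \<open>Translation\<close>

lemma OmegaTau_translate:
  assumes t: "reduced t" and O: "\<xi> \<in> OmegaTau A" and t_inv: "finv t \<in> \<xi>"
  shows "fmult t ` \<xi> \<in> OmegaTau A"
proof -
  have sub: "\<xi> \<subseteq> FG" and red: "\<And>w. w \<in> \<xi> \<Longrightarrow> reduced w"
    using OmegaTau_subset_FG[OF O] OmegaTau_reduced[OF O] by auto
  have mem: "fmult (fmult t \<omega>) v \<in> fmult t ` \<xi> \<longleftrightarrow> fmult \<omega> v \<in> \<xi>" if "\<omega> \<in> \<xi>" for \<omega> v
    using fmult_mem_fmult_image_iff[OF t sub reduced_fmult[OF red[OF that]]] t
    by (simp add: fmult_assoc)
  have "convex (fmult t ` \<xi>)"
    using OmegaTau_convex[OF O] red
    by (auto simp: convex_def finv_fmult_fmult_left[OF t] mem)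
  moreover have "[] \<in> fmult t ` \<xi>"
    using t_inv by (metis fmult_finv_right image_eqI)
  moreover have "fmult t ` \<xi> \<subseteq> FG"
    using t by (auto simp: FG_def reduced_fmult)
  ultimately show ?thesis
    using O by (auto simp: OmegaTau_def mem)
qed

lemma no_upper_bound_translate:
  assumes t: "reduced t" and sub: "\<xi> \<subseteq> FG" and unbounded: "no_upper_bound \<xi>"
  shows "no_upper_bound (fmult t ` \<xi>)"
  unfolding no_upper_bound_def
proof
  assume "\<exists>u\<in>FG. \<forall>s\<in>fmult t ` \<xi>. fle s u"
  then obtain u where u: "reduced u" "\<forall>s\<in>\<xi>. fle (fmult t s) u"
    by (auto simp: FG_def)
  have "fle s (fmult (finv t) u)" if "s \<in> \<xi>" for s
  proof -
    have "reduced s" using that sub by (auto simp: FG_def)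
    moreover have "fle (fmult t s) u" using u that by blast
    ultimately show ?thesis
      using t by (simp add: fle_def finv_fmult fmult_assoc reduced_finv)
  qed
  moreover have "fmult (finv t) u \<in> FG"
    using t by (simp add: FG_def reduced_fmult reduced_finv)
  ultimately show False
    using unbounded unfolding no_upper_bound_def by blast
qed

lemma OmegaT_translate:
  assumes t: "reduced t" and O: "\<xi> \<in> OmegaT A" and t_inv: "finv t \<in> \<xi>"
  shows "fmult t ` \<xi> \<in> OmegaT A"
proof -
  have OT: "\<xi> \<in> OmegaTau A" using O by (simp add: OmegaT_def)
  have "\<exists>\<eta>\<in>OmegaTau A. no_upper_bound \<eta> \<and> \<eta> \<inter> F = fmult t ` \<xi> \<inter> F" if "finite F" for F
  proof -
    \<comment> \<open>approximate \<xi> on the translated window, which also contains the new root finv t\<close>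
    let ?F = "insert (finv t) (fmult (finv t) ` F)"
    have "finite ?F" using that by simp
    then obtain \<eta> where \<eta>: "\<eta> \<in> OmegaTau A" "no_upper_bound \<eta>" "\<eta> \<inter> ?F = \<xi> \<inter> ?F"
      using O unfolding OmegaT_def by blast
    have "fmult t ` \<eta> \<inter> F = fmult t ` \<xi> \<inter> F"
      using \<eta>(3) mem_fmult_image_iff[OF t OmegaTau_subset_FG[OF \<eta>(1)]]
        mem_fmult_image_iff[OF t OmegaTau_subset_FG[OF OT]] by blast
    moreover have "finv t \<in> \<eta>" using \<eta>(3) t_inv by blast
    ultimately show ?thesis
      using OmegaTau_translate[OF t \<eta>(1)] no_upper_bound_translate[OF t OmegaTau_subset_FG \<eta>(2)] \<eta>(1)
      by blast
  qed
  then show ?thesis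
    using OmegaTau_translate[OF t OT t_inv] unfolding OmegaT_def by blast
qed

lemma translate_gen_mem_Delta:
  assumes "\<xi> \<in> OmegaT A" and "geninv x \<in> \<xi>"
  shows "fmult (gen x) ` \<xi> \<in> Delta A (gen x)"
proof -
  have "gen x \<in> fmult (gen x) ` \<xi>"
    using OmegaTau_Nil OmegaT_subset_OmegaTau assms(1) by (metis fmult_Nil_right image_eqI subsetD)
  then show ?thesis
    using OmegaT_translate[OF reduced_gen(1) assms(1)] assms(2) by (simp add: Delta_def)
qed

section \<open>Depth windows\<close>

definition depth_window :: "nat \<Rightarrow> 'g word set" where
  "depth_window k = {p @ q | p q. positive_word p \<and> negative_word q \<and> length p < k}"

lemma depth_window_0 [simp]: "depth_window 0 = {}"
  by (simp add: depth_window_def)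

lemma OmegaTau_agree_short_words:
  assumes O: "\<xi> \<in> OmegaTau A" and O': "\<xi>' \<in> OmegaTau A"
    and agree: "\<xi> \<inter> depth_window k = \<xi>' \<inter> depth_window k"
    and short: "\<forall>w\<in>F. length w < k"
  shows "\<xi> \<inter> F = \<xi>' \<inter> F"
proof -
  have "w \<in> depth_window k" if \<zeta>: "\<zeta> \<in> OmegaTau A" and w: "w \<in> \<zeta>" "w \<in> F" for w \<zeta>
  proof -
    obtain p q where "w = p @ q" "positive_word p" "negative_word q"
      using OmegaTau_positive_negative[OF \<zeta> w(1)] by blast
    with short w(2) show ?thesis
      unfolding depth_window_def by fastforce
  qed
  with O O' agree show ?thesis by blast
qed

lemma translate_gen_mem_transfer:
  assumes O: "\<xi> \<in> OmegaTau A" and O': "\<xi>' \<in> OmegaTau A"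
    and z: "geninv z \<in> \<xi>" "geninv z \<in> \<xi>'"
    and agree: "\<xi> \<inter> depth_window k = \<xi>' \<inter> depth_window k"
    and w: "w \<in> depth_window (Suc k)" "w \<in> fmult (gen z) ` \<xi>"
  shows "w \<in> fmult (gen z) ` \<xi>'"
proof -
  have mem_iff: "w \<in> fmult (gen z) ` \<zeta> \<longleftrightarrow> reduced w \<and> fmult (geninv z) w \<in> \<zeta>"
    if "\<zeta> \<in> OmegaTau A" for \<zeta>
    using mem_fmult_image_iff[OF reduced_gen(1) OmegaTau_subset_FG[OF that]] by simp
  have red: "reduced w" and mem: "fmult (geninv z) w \<in> \<xi>"
    using w(2) mem_iff[OF O] by auto
  have left: "fmult (geninv z) w = (if w \<noteq> [] \<and> hd w = (z, True) then tl w else (z, False) # w)"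
    using fmult_letter_left[OF red, of "(z, False)"] by (simp add: geninv_def inv_letter_def)
  obtain p q where pq: "w = p @ q" "positive_word p" "negative_word q" "length p < Suc k"
    using w(1) unfolding depth_window_def by blast
  have "fmult (geninv z) w \<in> \<xi>'"
  proof (cases p)
    case Nil
    \<comment> \<open>a negative tail below the common vertex z^-1 is determined by A\<close>
    have "\<not> (w \<noteq> [] \<and> hd w = (z, True))"
      using pq(1,3) Nil by (cases q) (auto simp: negative_word_def)
    then have "fmult (geninv z) w = [(z, False)] @ q"
      using left pq(1) Nil by (simp only: if_not_P) simp
    then show ?thesis
      using mem OmegaTau_negative_tail_iff[OF O O', of "[(z, False)]" q] z pq(3)
      by (simp add: geninv_def)
  next
    case (Cons a p')
    have "snd a" using pq(2) Cons by (simp add: positive_word_def)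
    show ?thesis
    proof (cases "fst a = z")
      case True
      then have "fmult (geninv z) w = p' @ q"
        using left pq(1) Cons \<open>snd a\<close> by (cases a) auto
      moreover have "p' @ q \<in> depth_window k"
        using pq Cons unfolding depth_window_def by (auto simp: positive_word_def)
      ultimately show ?thesis
        using mem agree by (metis IntD1 IntI)
    next
      case False
      \<comment> \<open>this case cannot occur: z^-1 would have the two successors [] and z^-1 a\<close>
      then have "fmult (geninv z) w = (z, False) # w"
        using left pq(1) Cons by auto
      then have "take 2 (fmult (geninv z) w) = [(z, False), (fst a, True)]"
        using pq(1) Cons \<open>snd a\<close> by (cases a) simp
      then have "[(z, False), (fst a, True)] \<in> \<xi>"
        using OmegaTau_take[OF O mem, of 2] by simp
      then show ?thesis
        using OmegaTau_geninv_gen[OF O z(1)] False by blast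
    qed
  qed
  then show ?thesis
    using red mem_iff[OF O'] by blast
qed

lemma translate_gen_agree_depth_window:
  assumes "\<xi> \<in> OmegaTau A" and "\<xi>' \<in> OmegaTau A"
    and "geninv z \<in> \<xi>" "geninv z \<in> \<xi>'"
    and "\<xi> \<inter> depth_window k = \<xi>' \<inter> depth_window k"
  shows "fmult (gen z) ` \<xi> \<inter> depth_window (Suc k) = fmult (gen z) ` \<xi>' \<inter> depth_window (Suc k)"
  using translate_gen_mem_transfer[OF assms]
    translate_gen_mem_transfer[OF assms(2,1,4,3) assms(5)[symmetric]]
  by blast

section \<open>Cylinder topology\<close>

definition cylinder_closed :: "'w set set \<Rightarrow> bool" where
  "cylinder_closed K \<longleftrightarrow> (\<forall>\<xi>. \<xi> \<notin> K \<longrightarrow> (\<exists>F. finite F \<and> (\<forall>\<eta>. \<eta> \<inter> F = \<xi> \<inter> F \<longrightarrow> \<eta> \<notin> K)))"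

lemma cylinder_closedD:
  assumes "cylinder_closed K" and "\<xi> \<notin> K"
  shows "\<exists>F. finite F \<and> (\<forall>\<eta>. \<eta> \<inter> F = \<xi> \<inter> F \<longrightarrow> \<eta> \<notin> K)"
  using assms unfolding cylinder_closed_def by iprover

abbreviation cantor_cube :: "('w \<Rightarrow> bool) topology" where
  "cantor_cube \<equiv> product_topology (\<lambda>_. discrete_topology UNIV) UNIV"

lemma openin_cantor_cube_cylinder:
  assumes "finite F"
  shows "openin cantor_cube {h'. \<forall>w\<in>F. h' w = h w}"
proof -
  have "{h'. \<forall>w\<in>F. h' w = h w} = PiE UNIV (\<lambda>w. if w \<in> F then {h w} else UNIV)"
    by (auto simp: PiE_def extensional_def Pi_def)
  moreover have "finite {w. (if w \<in> F then {h w} else UNIV) \<noteq> (UNIV :: bool set)}"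
    using assms by (rule finite_subset[rotated]) auto
  ultimately show ?thesis
    by (simp add: openin_PiE_gen)
qed

lemma compactin_cantor_cube_cylinder_closed:
  assumes closed: "cylinder_closed K"
  shows "compactin cantor_cube ((\<lambda>\<xi> w. w \<in> \<xi>) ` K)"
proof -
  have "openin cantor_cube (- (\<lambda>\<xi> w. w \<in> \<xi>) ` K)"
  proof (subst openin_subopen, intro ballI)
    fix h assume "h \<in> - (\<lambda>\<xi> w. w \<in> \<xi>) ` K"
    then have "Collect h \<notin> K" by (auto simp: image_iff)
    then obtain F where F: "finite F" "\<And>\<eta>. \<eta> \<inter> F = Collect h \<inter> F \<Longrightarrow> \<eta> \<notin> K"
      using closed unfolding cylinder_closed_def by blast
    then have "{h'. \<forall>w\<in>F. h' w = h w} \<subseteq> - (\<lambda>\<xi> w. w \<in> \<xi>) ` K"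
      by auto
    then show "\<exists>T. openin cantor_cube T \<and> h \<in> T \<and> T \<subseteq> - (\<lambda>\<xi> w. w \<in> \<xi>) ` K"
      using openin_cantor_cube_cylinder[OF F(1)] by blast
  qed
  then have "closedin cantor_cube ((\<lambda>\<xi> w. w \<in> \<xi>) ` K)"
    by (simp add: closedin_def Compl_eq_Diff_UNIV)
  then show ?thesis
    by (simp add: closedin_compact_space compact_space_product_topology compact_space_discrete_topology)
qed

lemma cylinder_closed_uniformly_locally_constant:
  assumes closed: "cylinder_closed K" and cont: "cont_Z K h"
  shows "\<exists>F. finite F \<and> (\<forall>\<xi>\<in>K. \<forall>\<xi>'\<in>K. \<xi> \<inter> F = \<xi>' \<inter> F \<longrightarrow> h \<xi> = h \<xi>')"
proof -
  obtain F where F: "\<And>\<xi>. \<xi> \<in> K \<Longrightarrow> finite (F \<xi>) \<and> (\<forall>\<eta>\<in>K. \<eta> \<inter> F \<xi> = \<xi> \<inter> F \<xi> \<longrightarrow> h \<eta> = h \<xi>)"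
    using cont unfolding cont_Z_def by metis
  define cyl where "cyl \<xi> = {h'. \<forall>w\<in>F \<xi>. h' w = (w \<in> \<xi>)}" for \<xi>
  have "\<forall>U\<in>cyl ` K. openin cantor_cube U"
    using F openin_cantor_cube_cylinder unfolding cyl_def by fastforce
  moreover have "(\<lambda>\<xi> w. w \<in> \<xi>) ` K \<subseteq> \<Union> (cyl ` K)"
    unfolding cyl_def by auto
  ultimately obtain \<Xi> where \<Xi>: "\<Xi> \<subseteq> K" "finite \<Xi>" "(\<lambda>\<xi> w. w \<in> \<xi>) ` K \<subseteq> \<Union> (cyl ` \<Xi>)"
    using compactin_cantor_cube_cylinder_closed[OF closed]
    unfolding compactin_def by (metis finite_subset_image)
  show ?thesis
  proof (intro exI conjI ballI impI)
    show "finite (\<Union> (F ` \<Xi>))"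
      using \<Xi> F by auto
    fix \<xi> \<xi>' assume \<xi>: "\<xi> \<in> K" "\<xi>' \<in> K" and agree: "\<xi> \<inter> \<Union> (F ` \<Xi>) = \<xi>' \<inter> \<Union> (F ` \<Xi>)"
    obtain \<zeta> where "\<zeta> \<in> \<Xi>" "(\<lambda>w. w \<in> \<xi>) \<in> cyl \<zeta>"
      using \<Xi>(3) \<xi>(1) by blast
    then have "\<xi> \<inter> F \<zeta> = \<zeta> \<inter> F \<zeta>" "\<xi>' \<inter> F \<zeta> = \<zeta> \<inter> F \<zeta>"
      using agree unfolding cyl_def by auto
    then show "h \<xi> = h \<xi>'"
      using F \<xi> \<open>\<zeta> \<in> \<Xi>\<close> \<Xi>(1) by (metis subsetD)
  qed
qed

lemma cylinder_closed_finite_dependence: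
  assumes "finite F" and "\<And>\<xi> \<eta>. (\<forall>w\<in>F. w \<in> \<xi> \<longleftrightarrow> w \<in> \<eta>) \<Longrightarrow> \<xi> \<in> K \<Longrightarrow> \<eta> \<in> K"
  shows "cylinder_closed K"
  unfolding cylinder_closed_def
proof (intro allI impI)
  fix \<xi> assume "\<xi> \<notin> K"
  have "\<eta> \<notin> K" if "\<eta> \<inter> F = \<xi> \<inter> F" for \<eta>
  proof
    assume "\<eta> \<in> K"
    moreover have "\<forall>w\<in>F. w \<in> \<eta> \<longleftrightarrow> w \<in> \<xi>"
      using that by (metis IntD1 IntD2 IntI)
    ultimately show False
      using assms(2) \<open>\<xi> \<notin> K\<close> by blast
  qed
  with assms(1) show "\<exists>F. finite F \<and> (\<forall>\<eta>. \<eta> \<inter> F = \<xi> \<inter> F \<longrightarrow> \<eta> \<notin> K)"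
    by blast
qed

lemma cylinder_closed_INT:
  assumes "\<And>i. cylinder_closed (K i)"
  shows "cylinder_closed (\<Inter>i. K i)"
  unfolding cylinder_closed_def
proof (intro allI impI)
  fix \<xi> assume "\<xi> \<notin> (\<Inter>i. K i)"
  then obtain i where "\<xi> \<notin> K i" by blast
  then obtain F where "finite F" "\<forall>\<eta>. \<eta> \<inter> F = \<xi> \<inter> F \<longrightarrow> \<eta> \<notin> K i"
    using assms[of i] unfolding cylinder_closed_def by blast
  then show "\<exists>F. finite F \<and> (\<forall>\<eta>. \<eta> \<inter> F = \<xi> \<inter> F \<longrightarrow> \<eta> \<notin> (\<Inter>i. K i))"
    by blast
qed

lemma cylinder_closed_Int:
  assumes "cylinder_closed K" and "cylinder_closed L"
  shows "cylinder_closed (K \<inter> L)"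
proof -
  have "K \<inter> L = (\<Inter>b. if b then K else L)" by auto
  then show ?thesis
    using cylinder_closed_INT[of "\<lambda>b. if b then K else L"] assms by simp
qed

lemma cylinder_closed_OmegaTau: "cylinder_closed (OmegaTau A)"
proof -
  have mem: "cylinder_closed {\<xi>. w \<in> \<xi>}" for w
    by (rule cylinder_closed_finite_dependence[of "{w}"]) simp_all
  have mem_imp: "cylinder_closed {\<xi>. w \<in> \<xi> \<longrightarrow> P}" for w P
    by (rule cylinder_closed_finite_dependence[of "{w}"]) simp_all
  have mem2_imp_mem: "cylinder_closed {\<xi>. u \<in> \<xi> \<and> v \<in> \<xi> \<longrightarrow> w \<in> \<xi>}" for u v w
    by (rule cylinder_closed_finite_dependence[of "{u, v, w}"]) simp_all
  have mem3_imp: "cylinder_closed {\<xi>. u \<in> \<xi> \<and> v \<in> \<xi> \<and> w \<in> \<xi> \<longrightarrow> P}" for u v w P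
    by (rule cylinder_closed_finite_dependence[of "{u, v, w}"]) simp_all
  have mem2_imp_iff: "cylinder_closed {\<xi>. u \<in> \<xi> \<and> v \<in> \<xi> \<longrightarrow> (w \<in> \<xi> \<longleftrightarrow> P)}" for u v w P
    by (rule cylinder_closed_finite_dependence[of "{u, v, w}"]) simp_all
  have "OmegaTau A = (\<Inter>w. {\<xi>. w \<in> \<xi> \<longrightarrow> w \<in> FG}) \<inter> {\<xi>. [] \<in> \<xi>}
     \<inter> (\<Inter>\<omega>. \<Inter>\<nu>. \<Inter>k. {\<xi>. \<omega> \<in> \<xi> \<and> \<nu> \<in> \<xi> \<longrightarrow> fmult \<omega> (take k (fmult (finv \<omega>) \<nu>)) \<in> \<xi>})
     \<inter> (\<Inter>\<omega>. \<Inter>y. \<Inter>z. {\<xi>. \<omega> \<in> \<xi> \<and> fmult \<omega> (gen y) \<in> \<xi> \<and> fmult \<omega> (gen z) \<in> \<xi> \<longrightarrow> y = z})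
     \<inter> (\<Inter>\<omega>. \<Inter>y. \<Inter>x. {\<xi>. \<omega> \<in> \<xi> \<and> fmult \<omega> (gen y) \<in> \<xi> \<longrightarrow>
                              (fmult \<omega> (geninv x) \<in> \<xi> \<longleftrightarrow> A x y)})"
    by (auto simp: OmegaTau_def convex_def)
  then show ?thesis
    by (simp only:) (intro cylinder_closed_Int cylinder_closed_INT mem mem_imp mem2_imp_mem mem3_imp mem2_imp_iff)
qed

lemma cylinder_closed_OmegaT: "cylinder_closed (OmegaT A)"
  unfolding cylinder_closed_def
proof (intro allI impI)
  fix \<xi> assume "\<xi> \<notin> OmegaT A"
  then consider "\<xi> \<notin> OmegaTau A"
    | F where "finite F" "\<forall>\<eta>\<in>OmegaTau A. no_upper_bound \<eta> \<longrightarrow> \<eta> \<inter> F \<noteq> \<xi> \<inter> F"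
    unfolding OmegaT_def by blast
  then show "\<exists>F. finite F \<and> (\<forall>\<eta>. \<eta> \<inter> F = \<xi> \<inter> F \<longrightarrow> \<eta> \<notin> OmegaT A)"
  proof cases
    case 1
    then show ?thesis
      using cylinder_closedD[OF cylinder_closed_OmegaTau] OmegaT_subset_OmegaTau by (meson subsetD)
  next
    case 2
    have "\<eta> \<notin> OmegaT A" if "\<eta> \<inter> F = \<xi> \<inter> F" for \<eta>
    proof
      assume "\<eta> \<in> OmegaT A"
      then obtain \<eta>' where "\<eta>' \<in> OmegaTau A" "no_upper_bound \<eta>'" "\<eta>' \<inter> F = \<eta> \<inter> F"
        using 2(1) unfolding OmegaT_def by blast
      with 2(2) that show False by simp
    qed
    with 2(1) show ?thesis by blast
  qed
qed

lemma cylinder_closed_Delta: "cylinder_closed (Delta A t)"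
proof -
  have "Delta A t = OmegaT A \<inter> {\<xi>. t \<in> \<xi>}"
    by (auto simp: Delta_def)
  moreover have "cylinder_closed {\<xi>. t \<in> \<xi>}"
    by (rule cylinder_closed_finite_dependence[of "{t}"]) simp_all
  ultimately show ?thesis
    by (simp add: cylinder_closed_Int cylinder_closed_OmegaT)
qed

section \<open>The descent\<close>

lemma psi_at_gen:
  assumes O: "\<xi> \<in> OmegaTau A" and y: "gen y \<in> \<xi>"
  shows "psi A g \<xi> = g y"
proof -
  have "sigma1 \<xi> = Some y"
    unfolding sigma1_def using OmegaTau_gen_iff[OF O y] y by auto
  moreover have "R_e \<xi> = {x. A x y}"
    unfolding R_e_def using OmegaTau_geninv_iff_gen[OF O y] by auto
  moreover have "hat A g (Some y) {x. A x y} = g y"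
    unfolding hat_def by (rule the_equality) (auto intro: exI[of _ "{}"])
  ultimately show ?thesis
    by (simp add: psi_def)
qed

lemma f_eq_L_alpha_plus_alpha_inv:
  assumes fin: "finite (dsum_support A f)" and \<xi>: "\<xi> \<in> Delta A (gen y)"
  shows "f y \<xi> = L_alpha A f \<xi> + (\<Sum>x\<in>dsum_support A f. alpha_inv A f x \<xi>)"
proof -
  have "ext0 A f x \<xi> = (if x = y then f y \<xi> else 0)" for x
    using Delta_gen_iff[OF \<xi>] by (simp add: ext0_def)
  moreover have "f y \<xi> = 0" if "y \<notin> dsum_support A f"
    using that \<xi> by (auto simp: dsum_support_def)
  ultimately have "(\<Sum>x\<in>dsum_support A f. ext0 A f x \<xi>) = f y \<xi>"
    using fin by simp
  then show ?thesis
    by (simp add: L_alpha_def sum_subtractf)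
qed

definition determined_at_depth :: "('g \<Rightarrow> 'g \<Rightarrow> bool) \<Rightarrow> ('g \<Rightarrow> 'g word set \<Rightarrow> int) \<Rightarrow> nat \<Rightarrow> bool" where
  "determined_at_depth A f k \<longleftrightarrow> (\<forall>y. \<forall>\<xi>\<in>Delta A (gen y). \<forall>\<xi>'\<in>Delta A (gen y).
     \<xi> \<inter> depth_window k = \<xi>' \<inter> depth_window k \<longrightarrow> f y \<xi> = f y \<xi>')"

lemma determined_at_depthD:
  "determined_at_depth A f k \<Longrightarrow> \<xi> \<in> Delta A (gen y) \<Longrightarrow> \<xi>' \<in> Delta A (gen y) \<Longrightarrow>
   \<xi> \<inter> depth_window k = \<xi>' \<inter> depth_window k \<Longrightarrow> f y \<xi> = f y \<xi>'"
  unfolding determined_at_depth_def by blast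

lemma alpha_inv_agree:
  assumes det: "determined_at_depth A f (Suc k)"
    and \<xi>: "\<xi> \<in> Delta A (gen y)" "\<xi>' \<in> Delta A (gen y)"
    and agree: "\<xi> \<inter> depth_window k = \<xi>' \<inter> depth_window k"
  shows "alpha_inv A f x \<xi> = alpha_inv A f x \<xi>'"
proof -
  have O: "\<xi> \<in> OmegaTau A" "\<xi>' \<in> OmegaTau A"
    using \<xi> Delta_subset_OmegaTau by auto
  have geninv: "geninv x \<in> \<xi> \<longleftrightarrow> A x y" "geninv x \<in> \<xi>' \<longleftrightarrow> A x y"
    using OmegaTau_geninv_iff_gen[OF O(1)] OmegaTau_geninv_iff_gen[OF O(2)] \<xi>
    by (auto simp: Delta_def)
  show ?thesis
  proof (cases "A x y")
    case True
    then have inv: "geninv x \<in> \<xi>" "geninv x \<in> \<xi>'"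
      using geninv by auto
    have "\<xi> \<in> OmegaT A" "\<xi>' \<in> OmegaT A"
      using \<xi> by (simp_all add: Delta_def)
    then have "f x (fmult (gen x) ` \<xi>) = f x (fmult (gen x) ` \<xi>')"
      using determined_at_depthD[OF det translate_gen_mem_Delta translate_gen_mem_Delta
          translate_gen_agree_depth_window[OF O inv agree]] inv by blast
    moreover have "\<xi> \<in> Delta A (geninv x)" "\<xi>' \<in> Delta A (geninv x)"
      using \<xi> inv by (auto simp: Delta_def)
    ultimately show ?thesis
      by (simp add: alpha_inv_def)
  next
    case False
    then show ?thesis
      using geninv by (simp add: alpha_inv_def Delta_def)
  qed
qed

lemma determined_at_depth_Suc_imp:
  assumes fin: "finite (dsum_support A f)"
    and L_const: "\<forall>y. \<forall>\<xi>\<in>Delta A (gen y). \<forall>\<xi>'\<in>Delta A (gen y). L_alpha A f \<xi> = L_alpha A f \<xi>'"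
    and det: "determined_at_depth A f (Suc k)"
  shows "determined_at_depth A f k"
  unfolding determined_at_depth_def
proof (intro allI ballI impI)
  fix y \<xi> \<xi>' assume \<xi>: "\<xi> \<in> Delta A (gen y)" "\<xi>' \<in> Delta A (gen y)"
    and agree: "\<xi> \<inter> depth_window k = \<xi>' \<inter> depth_window k"
  have L: "L_alpha A f \<xi> = L_alpha A f \<xi>'"
    using L_const \<xi> by blast
  have "f y \<xi> = L_alpha A f \<xi> + (\<Sum>x\<in>dsum_support A f. alpha_inv A f x \<xi>)"
    using f_eq_L_alpha_plus_alpha_inv[OF fin \<xi>(1)] .
  also have "\<dots> = L_alpha A f \<xi>' + (\<Sum>x\<in>dsum_support A f. alpha_inv A f x \<xi>')"
    using L alpha_inv_agree[OF det \<xi> agree] by simp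
  also have "\<dots> = f y \<xi>'"
    using f_eq_L_alpha_plus_alpha_inv[OF fin \<xi>(2)] by simp
  finally show "f y \<xi> = f y \<xi>'" .
qed

lemma determined_at_depth_0:
  assumes fin: "finite (dsum_support A f)"
    and L_const: "\<forall>y. \<forall>\<xi>\<in>Delta A (gen y). \<forall>\<xi>'\<in>Delta A (gen y). L_alpha A f \<xi> = L_alpha A f \<xi>'"
  shows "determined_at_depth A f k \<Longrightarrow> determined_at_depth A f 0"
proof (induction k)
  case (Suc k)
  then show ?case
    using determined_at_depth_Suc_imp[OF fin L_const, of k] by simp
qed

lemma in_dsum_determined_at_some_depth:
  assumes "in_dsum A f"
  shows "\<exists>K. determined_at_depth A f K"
proof -
  let ?S = "dsum_support A f"
  have "cont_Z (Delta A (gen z)) (f z)" for z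
    using assms by (simp add: in_dsum_def)
  then have "\<exists>F. finite F \<and> (\<forall>\<xi>\<in>Delta A (gen z). \<forall>\<xi>'\<in>Delta A (gen z). \<xi> \<inter> F = \<xi>' \<inter> F \<longrightarrow> f z \<xi> = f z \<xi>')" for z
    by (rule cylinder_closed_uniformly_locally_constant[OF cylinder_closed_Delta])
  then obtain F where F: "\<And>z. finite (F z)"
    "\<And>z \<xi> \<xi>'. \<xi> \<in> Delta A (gen z) \<Longrightarrow> \<xi>' \<in> Delta A (gen z) \<Longrightarrow> \<xi> \<inter> F z = \<xi>' \<inter> F z \<Longrightarrow>
       f z \<xi> = f z \<xi>'"
    by metis
  define K where "K = Suc (Max (insert 0 (length ` \<Union> (F ` ?S))))"
  have fin: "finite (insert 0 (length ` \<Union> (F ` ?S)))"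
    using assms F(1) by (simp add: in_dsum_def)
  have short: "\<forall>w\<in>F z. length w < K" if "z \<in> ?S" for z
  proof
    fix w assume "w \<in> F z"
    then have "length w \<le> Max (insert 0 (length ` \<Union> (F ` ?S)))"
      using Max_ge[OF fin] that by blast
    then show "length w < K"
      by (simp add: K_def)
  qed
  have "determined_at_depth A f K"
    unfolding determined_at_depth_def
  proof (intro allI ballI impI)
    fix y \<xi> \<xi>' assume \<xi>: "\<xi> \<in> Delta A (gen y)" "\<xi>' \<in> Delta A (gen y)"
      and agree: "\<xi> \<inter> depth_window K = \<xi>' \<inter> depth_window K"
    show "f y \<xi> = f y \<xi>'"
    proof (cases "y \<in> ?S")
      case True
      have "\<xi> \<in> OmegaTau A" "\<xi>' \<in> OmegaTau A"
        using \<xi> Delta_subset_OmegaTau by auto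
      then have "\<xi> \<inter> F y = \<xi>' \<inter> F y"
        using OmegaTau_agree_short_words agree short[OF True] by blast
      then show ?thesis
        by (rule F(2)[OF \<xi>])
    next
      case False
      then show ?thesis
        using \<xi> by (auto simp: dsum_support_def)
    qed
  qed
  then show ?thesis ..
qed

lemma determined_at_depth_0_imp_constant:
  assumes "determined_at_depth A f 0" and "\<xi> \<in> Delta A (gen y)" "\<xi>' \<in> Delta A (gen y)"
  shows "f y \<xi> = f y \<xi>'"
  using determined_at_depthD[OF assms] by simp

lemma in_image_j_if_constant:
  assumes fin: "finite (dsum_support A f)"
    and const: "\<And>y \<xi> \<xi>'. \<xi> \<in> Delta A (gen y) \<Longrightarrow> \<xi>' \<in> Delta A (gen y) \<Longrightarrow> f y \<xi> = f y \<xi>'"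
  shows "in_image_j A f"
proof -
  define n where "n y = (if Delta A (gen y) = {} then 0 else f y (SOME \<xi>. \<xi> \<in> Delta A (gen y)))" for y
  have n: "f y \<xi> = n y" if "\<xi> \<in> Delta A (gen y)" for y \<xi>
  proof -
    have "(SOME \<xi>. \<xi> \<in> Delta A (gen y)) \<in> Delta A (gen y)"
      using that by (rule someI)
    then have "f y \<xi> = f y (SOME \<xi>. \<xi> \<in> Delta A (gen y))"
      by (rule const[OF that])
    moreover have "Delta A (gen y) \<noteq> {}"
      using that by blast
    ultimately show ?thesis
      by (simp add: n_def)
  qed
  have "{y. n y \<noteq> 0} \<subseteq> dsum_support A f"
  proof
    fix y assume "y \<in> {y. n y \<noteq> 0}"
    then have "Delta A (gen y) \<noteq> {}"
      by (auto simp: n_def)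
    then obtain \<xi> where "\<xi> \<in> Delta A (gen y)"
      by blast
    with n \<open>y \<in> {y. n y \<noteq> 0}\<close> show "y \<in> dsum_support A f"
      by (auto simp: dsum_support_def)
  qed
  then have "finite {y. n y \<noteq> 0}"
    using fin finite_subset by blast
  then show ?thesis
    unfolding in_image_j_def using n by (intro exI[of _ n]) simp
qed

theorem lemma4p11:
  fixes A :: "'g \<Rightarrow> 'g \<Rightarrow> bool"
    and f :: "'g \<Rightarrow> 'g word set \<Rightarrow> int"
  assumes no_zero_rows: "\<forall>i. \<exists>j. A i j"
    and f_dsum: "in_dsum A f"
    and L_in: "\<exists>g\<in>RingA A. \<forall>\<xi>\<in>OmegaT A. L_alpha A f \<xi> = psi A g \<xi>"
  shows "in_image_j A f"
proof -
  have fin: "finite (dsum_support A f)"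
    using f_dsum by (simp add: in_dsum_def)
  obtain g where g: "\<forall>\<xi>\<in>OmegaT A. L_alpha A f \<xi> = psi A g \<xi>"
    using L_in by blast
  have "L_alpha A f \<xi> = g y" if "\<xi> \<in> Delta A (gen y)" for y \<xi>
  proof -
    have "\<xi> \<in> OmegaT A" "gen y \<in> \<xi>"
      using that by (simp_all add: Delta_def)
    then show ?thesis
      using g psi_at_gen[of \<xi> A y g] OmegaT_subset_OmegaTau by auto
  qed
  then have L_const: "\<forall>y. \<forall>\<xi>\<in>Delta A (gen y). \<forall>\<xi>'\<in>Delta A (gen y). L_alpha A f \<xi> = L_alpha A f \<xi>'"
    by simp
  obtain K where "determined_at_depth A f K"
    using in_dsum_determined_at_some_depth[OF f_dsum] by blast
  then have "determined_at_depth A f 0"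
    using determined_at_depth_0[OF fin L_const] by blast
  then show ?thesis
    using in_image_j_if_constant[OF fin] determined_at_depth_0_imp_constant by metis
qed

end
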